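(* For a positive integer $n$ let \[ A_n:=\sum_{k=0}^{n-1}(-1)^{n-1-k}\binom{2k}{k}^5(205k^2+160k+32). \] Then \[ A_n=16n\binom{2n}{n}\sum_{k=0}^{n-1}\binom{n+k-1}{k}^4(2k+n) \quad\text{and}\quad A_n=8n^2\binom{2n}{n}^2\sum_{k=0}^{n-1}(-1)^k\binom{2n-1}{n+k}\binom{2n-k-2}{n-k-1}^2 . \] *)

theory Defs
  imports Main
begin

definition A :: "nat \<Rightarrow> int" where
  "A n = (\<Sum>k<n. (-1) ^ (n - 1 - k) * (int ((2*k) choose k)) ^ 5
          * (205 * int k ^ 2 + 160 * int k + 32))"

end

theory Submission
  imports Defs
begin

text \<open>
  Both right-hand sides, like \<open>A\<close>, vanish at \<open>n = 0\<close> and satisfy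
  \<open>u (n + 1) + u n = binom(2n, n)^5 (205 n^2 + 160 n + 32)\<close>, so they coincide with \<open>A\<close>.
  Since \<open>(n + 1) binom(2n + 2, n + 1) = 2 (2n + 1) binom(2n, n)\<close>, this recurrence reduces to
  a creative-telescoping identity for each inner sum: a fixed combination of the summands at
  \<open>n\<close> and \<open>n + 1\<close> has an explicit closed-form partial sum over \<open>k\<close>. That identity is
  checked term by term: all binomial coefficients involved in one step are rational multiples of
  one of them, so clearing denominators leaves a polynomial identity.
\<close>

lemma of_nat_Suc_times_binomial:
  "of_nat (Suc k) * of_nat (Suc n choose Suc k)
     = (of_nat (Suc n) * of_nat (n choose k) :: 'a::comm_semiring_1)"
  by (metis Suc_times_binomial of_nat_mult)

lemma of_nat_Suc_times_binomial_same_row: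
  "of_nat (Suc k) * of_nat (n choose Suc k)
     = ((of_nat n - of_nat k) * of_nat (n choose k) :: 'a::comm_ring_1)"
proof -
  have "Suc n * (n choose k) = ((n choose k) + (n choose Suc k)) * Suc k"
    using Suc_times_binomial_eq[of n k] by simp
  then have "(of_nat (Suc n) * of_nat (n choose k) :: 'a)
      = (of_nat (n choose k) + of_nat (n choose Suc k)) * of_nat (Suc k)"
    by (metis of_nat_add of_nat_mult)
  then show ?thesis by (simp add: algebra_simps)
qed

lemma central_binomial_eq_double: "n \<ge> 1 \<Longrightarrow> (2*n) choose n = 2 * ((2*n - 1) choose n)"
proof -
  assume "n \<ge> 1"
  then obtain p where p: "n = Suc p" by (cases n) auto
  have "(2*p+1) choose Suc p = (2*p+1) choose p"
    using binomial_symmetric[of "Suc p" "2*p+1"] by simp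
  then show ?thesis using p by simp
qed

lemma Suc_times_central_binomial_Suc:
  "Suc n * ((2 * Suc n) choose Suc n) = 2 * (2*n + 1) * ((2*n) choose n)"
proof -
  have sym: "(2*n + 1) choose n = Suc (2*n) choose Suc n"
    using binomial_symmetric[of "Suc n" "2*n+1"] by simp
  have "Suc n * (Suc n * (Suc (2*n+1) choose Suc n)) = Suc n * (Suc (2*n + 1) * ((2*n + 1) choose n))"
    by (simp only: Suc_times_binomial)
  also have "\<dots> = Suc (2*n + 1) * (Suc n * (Suc (2*n) choose Suc n))"
    by (simp only: sym mult.left_commute)
  also have "\<dots> = Suc n * (2 * (2*n + 1) * ((2*n) choose n))"
    by (simp only: Suc_times_binomial) (simp add: algebra_simps)
  finally have "Suc n * (Suc n * (Suc (2*n+1) choose Suc n)) = Suc n * (2 * (2*n + 1) * ((2*n) choose n))" .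
  then show ?thesis by (simp only: mult_cancel1 nat.distinct) (simp del: binomial_Suc_Suc)
qed

lemma of_nat_Suc_times_central_binomial_Suc:
  "of_nat (Suc n) * of_nat ((2 * Suc n) choose Suc n)
     = (2 * (2 * of_nat n + 1) * of_nat ((2*n) choose n) :: 'a::comm_semiring_1)"
  unfolding of_nat_mult[symmetric] Suc_times_central_binomial_Suc by (simp add: algebra_simps)

definition A_term :: "nat \<Rightarrow> int" where
  "A_term k = int ((2*k) choose k) ^ 5 * (205 * int k ^ 2 + 160 * int k + 32)"

lemma sum_atMost_neg_one_power_diff:
  fixes h :: "nat \<Rightarrow> 'a::ring_1"
  shows "(\<Sum>k\<le>n. (-1) ^ (n - k) * h k) = h n - (\<Sum>k<n. (-1) ^ (n - 1 - k) * h k)"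
proof -
  have "(-1) ^ (n - k) = - ((-1) ^ (n - 1 - k) :: 'a)" if "k < n" for k
  proof -
    from that have "n - k = Suc (n - 1 - k)" by simp
    then show ?thesis by simp
  qed
  then show ?thesis
    by (simp add: lessThan_Suc_atMost[symmetric] sum_negf)
qed

lemma A_0: "A 0 = 0"
  by (simp add: A_def)

lemma A_Suc: "A (Suc n) + A n = A_term n"
  using sum_atMost_neg_one_power_diff
      [of n "\<lambda>k. int ((2*k) choose k) ^ 5 * (205 * int k ^ 2 + 160 * int k + 32)"]
  unfolding A_def A_term_def by (simp add: lessThan_Suc_atMost mult.assoc)

lemma eq_A_if_recurrence:
  assumes "f 0 = 0" and "\<And>n. f (Suc n) + f n = A_term n"
  shows "f n = A n"
proof (induction n)
  case 0 show ?case using assms(1) A_0 by simp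
next
  case (Suc n) show ?case using assms(2)[of n] A_Suc[of n] Suc.IH by simp
qed

definition F :: "nat \<Rightarrow> nat \<Rightarrow> int" where
  "F n k = int ((n + k - 1) choose k) ^ 4 * (2 * int k + int n)"

lemma F_certificate_step:
  fixes n m :: nat
  defines "q \<equiv> \<lambda>y::int. 5 * int n ^ 2 + 6 * int n * y + 2 * y ^ 2"
  shows "int ((n + m) choose m) ^ 4 * q (int m + 1) + 2 * (2 * int n + 1) * F (Suc n) (Suc m)
           + int n * F n (Suc m)
         = int ((n + Suc m) choose Suc m) ^ 4 * q (int m + 2)"
proof -
  define x M where "x = int n" and "M = int m + 1"
  define a b c where "a = int ((n + Suc m) choose Suc m)" and "b = int ((n + m) choose Suc m)"
    and "c = int ((n + m) choose m)"
  have a: "M * a = (x + M) * c"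
    using of_nat_Suc_times_binomial[of m "n + m", where 'a=int]
    unfolding a_def c_def x_def M_def by (simp del: binomial_Suc_Suc add: algebra_simps)
  have b: "M * b = x * c"
    using of_nat_Suc_times_binomial_same_row[of m "n + m", where 'a=int]
    unfolding b_def c_def x_def M_def by (simp add: algebra_simps)
  have "M ^ 4 * (c ^ 4 * q M + 2 * (2 * x + 1) * (a ^ 4 * (2 * M + x + 1)) + x * (b ^ 4 * (2 * M + x)))
      = c ^ 4 * (M ^ 4 * q M) + 2 * (2 * x + 1) * (2 * M + x + 1) * (M * a) ^ 4
        + x * (2 * M + x) * (M * b) ^ 4"
    by (simp add: algebra_simps power_mult_distrib)
  also have "\<dots> = c ^ 4 * (M ^ 4 * q M + 2 * (2 * x + 1) * (2 * M + x + 1) * (x + M) ^ 4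
        + x ^ 5 * (2 * M + x))"
    unfolding a b by (simp add: algebra_simps power_mult_distrib numeral_eq_Suc)
  also have "\<dots> = c ^ 4 * ((x + M) ^ 4 * q (M + 1))"
    unfolding q_def x_def by algebra
  also have "\<dots> = (M * a) ^ 4 * q (M + 1)"
    by (simp add: a power_mult_distrib)
  also have "\<dots> = M ^ 4 * (a ^ 4 * q (M + 1))"
    by (simp add: power_mult_distrib)
  finally show ?thesis
    unfolding F_def a_def b_def c_def x_def M_def by (simp add: add_ac)
qed

lemma F_telescoping:
  "(\<Sum>k\<le>m. 2 * (2 * int n + 1) * F (Suc n) k + int n * F n k)
     = int ((n + m) choose m) ^ 4 * (5 * int n ^ 2 + 6 * int n * (int m + 1) + 2 * (int m + 1) ^ 2)"
proof (induction m)
  case 0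
  show ?case by (simp add: F_def algebra_simps power2_eq_square)
next
  case (Suc m)
  show ?case
    unfolding sum.atMost_Suc Suc.IH using F_certificate_step[of n m]
    by (simp del: binomial_Suc_Suc add: algebra_simps)
qed

definition F_sum :: "nat \<Rightarrow> int" where
  "F_sum n = (\<Sum>k<n. F n k)"

lemma F_sum_Suc:
  "2 * (2 * int n + 1) * F_sum (Suc n) + int n * F_sum n
     = int ((2*n) choose n) ^ 4 * (5 * int n ^ 2 + 6 * int n * (int n + 1) + 2 * (int n + 1) ^ 2)
       - int n * F n n"
proof -
  have "(\<Sum>k\<le>n. 2 * (2 * int n + 1) * F (Suc n) k + int n * F n k)
      = 2 * (2 * int n + 1) * F_sum (Suc n) + int n * (F_sum n + F n n)"
    unfolding F_sum_def
    by (simp add: sum.distrib sum_distrib_left distrib_left lessThan_Suc_atMost[symmetric])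
  moreover have "(n + n) choose n = (2*n) choose n"
    by (simp add: mult_2)
  ultimately show ?thesis
    using F_telescoping[of n n] by (simp add: algebra_simps)
qed

lemma A_eq_F_sum: "A n = 16 * int n * int ((2*n) choose n) * F_sum n"
proof (rule eq_A_if_recurrence[symmetric], goal_cases)
  case (2 n)
  define C where "C = int ((2*n) choose n)"
  have last: "16 * int n * F n n = 3 * int n ^ 2 * C ^ 4"
  proof (cases "n = 0")
    case False
    then have "C = 2 * int ((2*n - 1) choose n)"
      unfolding C_def by (simp add: central_binomial_eq_double)
    moreover have "n + n - 1 = 2*n - 1" by simp
    ultimately show ?thesis unfolding F_def by (simp add: power_mult_distrib power2_eq_square)
  qed (simp add: F_def)
  have "16 * int (Suc n) * int ((2 * Suc n) choose Suc n) * F_sum (Suc n)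
      + 16 * int n * int ((2*n) choose n) * F_sum n
      = 16 * C * (2 * (2 * int n + 1) * F_sum (Suc n) + int n * F_sum n)"
    unfolding mult.assoc[of 16] of_nat_Suc_times_central_binomial_Suc C_def
    by (simp add: algebra_simps)
  also have "\<dots> = C ^ 5 * (16 * (5 * int n ^ 2 + 6 * int n * (int n + 1) + 2 * (int n + 1) ^ 2))
      - C * (16 * int n * F n n)"
    unfolding F_sum_Suc C_def[symmetric] by (simp add: algebra_simps eval_nat_numeral)
  also have "\<dots> = A_term n"
    unfolding last A_term_def C_def by (simp add: algebra_simps eval_nat_numeral)
  finally show ?case .
qed simp

lemma of_nat_binomial_pred_row_Suc:
  assumes "n \<ge> 1"
  shows "2 * int n * (int m + 1) * int ((2*n - 1) choose Suc m)
           = (2 * int n - 1 - int m) * (2 * int n - int m) * int ((2*n) choose m)"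
proof -
  define d e g where "d = int ((2*n - 1) choose m)" and "e = int ((2*n - 1) choose Suc m)"
    and "g = int ((2*n) choose Suc m)"
  have row: "Suc (2*n - 1) = 2*n" "int (2*n - 1) = 2 * int n - 1"
    using assms by auto
  have e: "(int m + 1) * e = (2 * int n - 1 - int m) * d"
    using of_nat_Suc_times_binomial_same_row[of m "2*n - 1", where 'a=int]
    unfolding row(2) d_def e_def by (simp add: add.commute)
  have "2 * int n * (int m + 1) * e = 2 * int n * ((int m + 1) * e)"
    by (simp only: mult.assoc)
  also have "\<dots> = (2 * int n - 1 - int m) * (2 * int n * d)"
    unfolding e by (simp only: mult_ac)
  also have "2 * int n * d = (int m + 1) * g"
    using of_nat_Suc_times_binomial[of m "2*n - 1", where 'a=int]
    unfolding row(1) d_def g_def by (simp del: binomial_Suc_Suc add: add.commute)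
  also have "(int m + 1) * g = (2 * int n - int m) * int ((2*n) choose m)"
    using of_nat_Suc_times_binomial_same_row[of m "2*n", where 'a=int]
    unfolding g_def by (simp add: add.commute)
  finally show ?thesis
    unfolding e_def by (simp only: mult.assoc)
qed

text \<open>
  The second sum, read backwards via \<open>k \<mapsto> n - 1 - k\<close> and binomial symmetry, has the
  summands \<open>(-1)^(n-1-j) G n j\<close>.
\<close>

definition G :: "nat \<Rightarrow> nat \<Rightarrow> int" where
  "G n j = int ((2*n - 1) choose j) * int ((n + j - 1) choose j) ^ 2"

lemma G_certificate_step:
  fixes n m :: nat
  defines "l \<equiv> \<lambda>y::int. (120 * int n + 44) * int n + (84 * int n + 32) * y"
  assumes "n \<ge> 1"
  shows "int ((2*n) choose m) * int ((n + m) choose m) ^ 2 * l (int m + 1)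
           - 32 * (2 * int n + 1) ^ 2 * G (Suc n) (Suc m) + 8 * int n ^ 2 * G n (Suc m)
         = - (int ((2*n) choose Suc m) * int ((n + Suc m) choose Suc m) ^ 2 * l (int m + 2))"
proof -
  define x M where "x = int n" and "M = int m + 1"
  define f g e t where "f = int ((2*n) choose m)" and "g = int ((2*n) choose Suc m)"
    and "e = int ((2*n - 1) choose Suc m)" and "t = int (Suc (2*n) choose Suc m)"
  define b b' c where "b = int ((n + Suc m) choose Suc m)" and "b' = int ((n + m) choose Suc m)"
    and "c = int ((n + m) choose m)"
  have t: "M * t = (2 * x + 1) * f"
    using of_nat_Suc_times_binomial[of m "2*n", where 'a=int]
    unfolding t_def f_def x_def M_def by (simp del: binomial_Suc_Suc add: algebra_simps)
  have g: "M * g = (2 * x - (M - 1)) * f"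
    using of_nat_Suc_times_binomial_same_row[of m "2*n", where 'a=int]
    unfolding g_def f_def x_def M_def by (simp add: algebra_simps)
  have e: "2 * x * M * e = (2 * x - 1 - (M - 1)) * (2 * x - (M - 1)) * f"
    using of_nat_binomial_pred_row_Suc[OF assms(2), of m] unfolding e_def f_def x_def M_def by simp
  have b: "M * b = (x + M) * c"
    using of_nat_Suc_times_binomial[of m "n + m", where 'a=int]
    unfolding b_def c_def x_def M_def by (simp del: binomial_Suc_Suc add: algebra_simps)
  have b': "M * b' = x * c"
    using of_nat_Suc_times_binomial_same_row[of m "n + m", where 'a=int]
    unfolding b'_def c_def x_def M_def by (simp add: algebra_simps)
  have "f * c ^ 2 * l M - 32 * (2 * x + 1) ^ 2 * (t * b ^ 2) + 8 * x ^ 2 * (e * b' ^ 2)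
      = - (g * b ^ 2 * l (M + 1))" (is "?lhs = ?rhs")
  proof (rule mult_left_cancel[THEN iffD1])
    show "2 * x * M ^ 3 \<noteq> 0"
      using assms(2) unfolding x_def M_def by simp
    have "2 * x * M ^ 3 * ?lhs
        = 2 * x * M ^ 3 * l M * (f * c ^ 2) - 64 * x * (2 * x + 1) ^ 2 * (M * t) * (M * b) ^ 2
          + 8 * x ^ 2 * (2 * x * M * e) * (M * b') ^ 2"
      by (simp add: algebra_simps power2_eq_square power3_eq_cube)
    also have "\<dots> = f * c ^ 2 * (2 * x * M ^ 3 * l M - 64 * x * (2 * x + 1) ^ 3 * (x + M) ^ 2
          + 8 * x ^ 4 * (2 * x - 1 - (M - 1)) * (2 * x - (M - 1)))"
      unfolding t b e b' by (simp add: algebra_simps power2_eq_square power3_eq_cube power4_eq_xxxx)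
    also have "\<dots> = f * c ^ 2 * (- 2 * x * (2 * x - (M - 1)) * (x + M) ^ 2 * l (M + 1))"
      unfolding l_def x_def by algebra
    also have "\<dots> = - 2 * x * l (M + 1) * ((M * g) * (M * b) ^ 2)"
      unfolding g b by (simp add: algebra_simps power2_eq_square)
    also have "\<dots> = 2 * x * M ^ 3 * ?rhs"
      by (simp add: algebra_simps power2_eq_square power3_eq_cube)
    finally show "2 * x * M ^ 3 * ?lhs = 2 * x * M ^ 3 * ?rhs" .
  qed
  moreover have "G (Suc n) (Suc m) = t * b ^ 2" "G n (Suc m) = e * b' ^ 2"
    unfolding G_def t_def b_def e_def b'_def by (simp_all add: add_ac)
  moreover have "int m + 2 = M + 1"
    unfolding M_def by simp
  ultimately show ?thesis
    unfolding \<open>int m + 2 = M + 1\<close> f_def[symmetric] c_def[symmetric] g_def[symmetric]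
      b_def[symmetric] M_def[symmetric] x_def[symmetric] by simp
qed

lemma G_telescoping:
  assumes "n \<ge> 1"
  shows "(\<Sum>j\<le>m. (-1) ^ (m - j) * (8 * int n ^ 2 * G n j - 32 * (2 * int n + 1) ^ 2 * G (Suc n) j))
    = - (int ((2*n) choose m) * int ((n + m) choose m) ^ 2
          * ((120 * int n + 44) * int n + (84 * int n + 32) * (int m + 1)))"
proof (induction m)
  case 0
  show ?case by (simp add: G_def algebra_simps power2_eq_square)
next
  case (Suc m)
  show ?case
    unfolding sum_atMost_neg_one_power_diff[of "Suc m"] lessThan_Suc_atMost diff_Suc_1 Suc.IH
    using G_certificate_step[OF assms, of m] by (simp del: binomial_Suc_Suc add: algebra_simps)
qed

definition G_sum :: "nat \<Rightarrow> int" where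
  "G_sum n = (\<Sum>j<n. (-1) ^ (n - 1 - j) * G n j)"

lemma G_sum_Suc:
  assumes "n \<ge> 1"
  shows "32 * (2 * int n + 1) ^ 2 * G_sum (Suc n) + 8 * int n ^ 2 * G_sum n
     = int ((2*n) choose n) ^ 3 * ((120 * int n + 44) * int n + (84 * int n + 32) * (int n + 1))
       + 8 * int n ^ 2 * G n n"
proof -
  have split: "(\<Sum>j\<le>n. (-1) ^ (n - j) * (a * G n j - b * G (Suc n) j))
      = a * (G n n - G_sum n) - b * G_sum (Suc n)" for a b :: int
  proof -
    have "G_sum (Suc n) = (\<Sum>j\<le>n. (-1) ^ (n - j) * G (Suc n) j)"
      unfolding G_sum_def by (simp add: lessThan_Suc_atMost)
    then show ?thesis
      unfolding sum_atMost_neg_one_power_diff[of n "G n", folded G_sum_def, symmetric]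
      by (simp add: right_diff_distrib sum_subtractf sum_distrib_left mult.left_commute)
  qed
  have "(n + n) choose n = (2*n) choose n"
    by (simp add: mult_2)
  from G_telescoping[OF assms, of n, unfolded split this] show ?thesis
    by (simp add: algebra_simps power2_eq_square power3_eq_cube)
qed

lemma A_eq_G_sum: "A n = 8 * int n ^ 2 * int ((2*n) choose n) ^ 2 * G_sum n"
proof (rule eq_A_if_recurrence[symmetric], goal_cases)
  case (2 n)
  show ?case
  proof (cases "n = 0")
    case True
    then show ?thesis by (simp add: G_sum_def G_def A_term_def)
  next
    case False
    define C L where "C = int ((2*n) choose n)"
      and "L = (120 * int n + 44) * int n + (84 * int n + 32) * (int n + 1)"
    have last: "8 * int n ^ 2 * G n n = int n ^ 2 * C ^ 3"
    proof -
      have "C = 2 * int ((2*n - 1) choose n)"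
        using False unfolding C_def by (simp add: central_binomial_eq_double)
      moreover have "n + n - 1 = 2*n - 1" by simp
      ultimately show ?thesis
        unfolding G_def by (simp add: power_mult_distrib power2_eq_square power3_eq_cube)
    qed
    have central: "int (Suc n) ^ 2 * int ((2 * Suc n) choose Suc n) ^ 2 = 4 * (2 * int n + 1) ^ 2 * C ^ 2"
      unfolding power_mult_distrib[symmetric] of_nat_Suc_times_central_binomial_Suc C_def
      by (simp add: power_mult_distrib power2_eq_square algebra_simps)
    have "8 * int (Suc n) ^ 2 * int ((2 * Suc n) choose Suc n) ^ 2 * G_sum (Suc n)
        + 8 * int n ^ 2 * int ((2*n) choose n) ^ 2 * G_sum n
        = C ^ 2 * (32 * (2 * int n + 1) ^ 2 * G_sum (Suc n) + 8 * int n ^ 2 * G_sum n)"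
      unfolding mult.assoc[of 8 "int (Suc n) ^ 2"] central C_def[symmetric] by (simp add: algebra_simps)
    also have "\<dots> = C ^ 2 * (C ^ 3 * L + 8 * int n ^ 2 * G n n)"
      using G_sum_Suc[of n] False unfolding C_def L_def by simp
    also have "\<dots> = A_term n"
      unfolding last L_def A_term_def C_def by (simp add: algebra_simps eval_nat_numeral)
    finally show ?thesis .
  qed
qed simp

lemma sum_reflected_binomials_eq_G_sum:
  "(\<Sum>k<n. (-1) ^ k * int ((2*n - 1) choose (n + k)) * int ((2*n - k - 2) choose (n - k - 1)) ^ 2)
     = G_sum n"
proof -
  have "(-1) ^ k * int ((2*n - 1) choose (n + k)) * int ((2*n - k - 2) choose (n - k - 1)) ^ 2
      = (-1) ^ (n - 1 - (n - Suc k)) * G n (n - Suc k)" if "k < n" for k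
  proof -
    have "(2*n - 1) choose (n + k) = (2*n - 1) choose (n - Suc k)"
      using that binomial_symmetric[of "n - Suc k" "2*n - 1"] by simp
    moreover have "n - 1 - (n - Suc k) = k" "n + (n - Suc k) - 1 = 2*n - k - 2"
      using that by auto
    ultimately show ?thesis unfolding G_def by (simp add: mult.assoc)
  qed
  then show ?thesis
    unfolding G_sum_def sum.nat_diff_reindex[symmetric, of "\<lambda>j. (-1) ^ (n - 1 - j) * G n j"]
    by (intro sum.cong) simp_all
qed

theorem theorem7:
  fixes n :: nat
  assumes "n \<ge> 1"
  shows "A n = 16 * int n * int ((2*n) choose n)
                 * (\<Sum>k<n. int ((n + k - 1) choose k) ^ 4 * (2 * int k + int n))
       \<and> A n = 8 * int n ^ 2 * int ((2*n) choose n) ^ 2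
                 * (\<Sum>k<n. (-1) ^ k * int ((2*n - 1) choose (n + k))
                      * int ((2*n - k - 2) choose (n - k - 1)) ^ 2)"
  using A_eq_F_sum[of n] A_eq_G_sum[of n]
  unfolding F_sum_def F_def sum_reflected_binomials_eq_G_sum by (rule conjI)

end
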